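(* Let $(X,x_0)\cong(\mathbb{C}^n/\mathbb{Z}_r(1,a_1,\dots,a_{n-1}),0)$, where $r>0$ is an integer, $\gcd(a_1,r)=1$, and $a_j$ are integers with $0\le a_j<r$ for $1\le j\le n-1$. Let $l:=\min\{ i \mid 0<i\le r,\ a_j i\equiv i \pmod r \text{ for all } 1\le j\le n-1\}$. Let $\mu:Y\to X$ be the weighted blow up of $X$ at $x_0$ with weights $\mathrm{wt}(x_0,x_1,\dots,x_{n-1})=(l/r,l/r,\dots,l/r)$, with exceptional divisor $E$. Then \[\mathrm{w}\text{-}\mathrm{mult}_{\mu:x_0}X = r^{n-1}/l^n.\]
   Context: $\mathbb{C}^n/\mathbb{Z}_r(1,a_1,\dots,a_{n-1})$ denotes the quotient of $\mathbb{C}^n$ with coordinates $x_0,\dots,x_{n-1}$ by the cyclic group of order $r$ whose generator acts by $(x_0,x_1,\dots,x_{n-1})\mapsto(\zeta x_0,\zeta^{a_1}x_1,\dots,\zeta^{a_{n-1}}x_{n-1})$, $\zeta=e^{2\pi i/r}$. For the weighted blow up $\mu$ with weights $(l/r,\dots,l/r)$, $\mu_*\mathcal{O}_Y(-hE)$ (for integers $h\ge0$) is the ideal of $\mathcal{O}_{X,x_0}$ generated by the $\mathbb{Z}_r$-invariant monomials $x_0^{b_0}\cdots x_{n-1}^{b_{n-1}}$ with $\frac{l}{r}(b_0+\dots+b_{n-1})\ge h$. Weighted multiplicity: for a weighted blow up $\mu:Y\to X$ at $x_0$ with exceptional divisor $E$ and a subvariety $W\subseteq X$ of dimension $p$ normal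 at $x_0$ with strict transform $\bar W$, $\mathrm{w}\text{-}\mathrm{mult}_{\mu:x_0}W$ is the number such that $\dim_{\mathbb{C}}\mathcal{O}_{W,x_0}/\mu_*\mathcal{O}_{\bar W}(-hE|_{\bar W}) = \mathrm{w}\text{-}\mathrm{mult}_{\mu:x_0}W\cdot \frac{h^p}{p!}+(\text{lower order terms in } h)$. *)

theory Defs
  imports Complex_Main "HOL-Library.Landau_Symbols" "HOL-Number_Theory.Cong"
begin

text \<open>Monomials x_0^(b 0) ... x_(n-1)^(b (n-1)) in n variables, encoded as exponent
  functions vanishing outside {0..<n}.\<close>
definition monomials :: "nat \<Rightarrow> (nat \<Rightarrow> nat) set" where
  "monomials n = {b. \<forall>i\<ge>n. b i = 0}"

text \<open>Invariance of a monomial under the generator of Z_r acting with weights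
  (1, a_1, ..., a_(n-1)): the character is zeta^(b_0 + sum a_j b_j).\<close>
definition Zr_invariant :: "nat \<Rightarrow> nat \<Rightarrow> (nat \<Rightarrow> nat) \<Rightarrow> (nat \<Rightarrow> nat) \<Rightarrow> bool" where
  "Zr_invariant n r a b \<longleftrightarrow> [b 0 + (\<Sum>j\<in>{1..<n}. a j * b j) = 0] (mod r)"

definition l_index :: "nat \<Rightarrow> nat \<Rightarrow> (nat \<Rightarrow> nat) \<Rightarrow> nat" where
  "l_index n r a = (LEAST i. 0 < i \<and> i \<le> r \<and> (\<forall>j\<in>{1..<n}. [a j * i = i] (mod r)))"

text \<open>dim_C O_{X,x0} / mu_* O_Y(-hE) for the weighted blow up with weights (w,...,w):
  the ideal is generated by the invariant monomials of weighted degree \<ge> h, so the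
  quotient has as C-basis the invariant monomials of weighted degree < h.\<close>
definition colength_wbu :: "nat \<Rightarrow> nat \<Rightarrow> (nat \<Rightarrow> nat) \<Rightarrow> real \<Rightarrow> nat \<Rightarrow> nat" where
  "colength_wbu n r a w h =
     card {b \<in> monomials n. Zr_invariant n r a b \<and> w * real (\<Sum>i<n. b i) < real h}"

definition has_wmult :: "nat \<Rightarrow> (nat \<Rightarrow> nat) \<Rightarrow> real \<Rightarrow> bool" where
  "has_wmult p D c \<longleftrightarrow>
     (\<lambda>h. real (D h) - c * real h ^ p / fact p) \<in> o(\<lambda>h. real h ^ p)"

end

(* With weight w = l/r, the invariant monomials of weighted degree < h are the exponent
   vectors b with b_0 + ... + b_(n-1) < m := ceil (h / w) and b_0 + sum_j a_j b_j = 0 (mod r).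
   Once the tail (b_1, ..., b_(n-1)) is fixed, the admissible b_0 form a residue class
   in an interval of length m - |tail|, so there are |interval| / r of them up to an
   error of 1.  Summing over the tails, the count is binom (m + n - 1, n) / r up to
   O(m^(n-1)), i.e. (h / w)^n / (r n!) + O(h^(n-1)). *)

theory Submission
  imports Defs "HOL-Real_Asymp.Real_Asymp"
begin

definition lists_sum_less :: "nat \<Rightarrow> nat \<Rightarrow> nat list set" where
  "lists_sum_less k m = {xs. length xs = k \<and> sum_list xs < m}"

lemma lists_sum_less_subset: "lists_sum_less k m \<subseteq> {xs. set xs \<subseteq> {..<m} \<and> length xs = k}"
  unfolding lists_sum_less_def using member_le_sum_list by fastforce

lemma finite_lists_sum_less: "finite (lists_sum_less k m)"
  by (rule finite_subset[OF lists_sum_less_subset]) (simp add: finite_lists_length_eq)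

lemma card_lists_sum_less_le: "card (lists_sum_less k m) \<le> m ^ k"
  using card_mono[OF _ lists_sum_less_subset] by (simp add: finite_lists_length_eq card_lists_length_eq)

lemma card_lists_sum_less:
  assumes "k \<ge> 1"
  shows "card (lists_sum_less k m) = (m + k - 1) choose k"
proof (induction m)
  case 0
  then show ?case using assms by (simp add: lists_sum_less_def)
next
  case (Suc m)
  let ?sum_eq = "{xs::nat list. length xs = k \<and> sum_list xs = m}"
  have split: "lists_sum_less k (Suc m) = lists_sum_less k m \<union> ?sum_eq"
    by (auto simp: lists_sum_less_def)
  have finite: "finite ?sum_eq"
    by (rule finite_subset[OF _ finite_lists_sum_less[of k "Suc m"]]) (auto simp: lists_sum_less_def)
  have disjoint: "lists_sum_less k m \<inter> ?sum_eq = {}"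
    by (auto simp: lists_sum_less_def)
  have "card (lists_sum_less k (Suc m)) = card (lists_sum_less k m) + card ?sum_eq"
    unfolding split by (rule card_Un_disjoint[OF finite_lists_sum_less finite disjoint])
  also have "card ?sum_eq = (m + k - 1) choose (k - 1)"
    using assms binomial_symmetric[of m "m + k - 1"] by (simp add: card_length_sum_list)
  finally show ?case
    using Suc.IH assms by (cases k) auto
qed

lemma card_lists_sum_less_bounds:
  assumes "k \<ge> 1"
  shows "real m ^ k / fact k \<le> card (lists_sum_less k m)"
    and "card (lists_sum_less k m) \<le> (real m + real k) ^ k / fact k"
proof -
  have "real (card (lists_sum_less k m)) = real (m + k - 1) gchoose k"
    using card_lists_sum_less[OF assms] binomial_gbinomial by metis
  also have "\<dots> = (\<Prod>i<k. real m + real i) / fact k"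
    using assms by (simp add: gbinomial_pochhammer' of_nat_diff pochhammer_prod atLeast0LessThan)
  finally have card_eq: "card (lists_sum_less k m) = (\<Prod>i<k. real m + real i) / fact k" .
  have "real m ^ k \<le> (\<Prod>i<k. real m + real i)"
    using prod_mono[of "{..<k}" "\<lambda>_. real m"] by simp
  then show "real m ^ k / fact k \<le> card (lists_sum_less k m)"
    unfolding card_eq by (simp add: divide_right_mono)
  have "(\<Prod>i<k. real m + real i) \<le> (real m + real k) ^ k"
    using prod_mono[of "{..<k}" _ "\<lambda>_. real m + real k"] by simp
  then show "card (lists_sum_less k m) \<le> (real m + real k) ^ k / fact k"
    unfolding card_eq by (simp add: divide_right_mono)
qed

lemma card_congruent_lessThan_le:
  fixes r L g :: nat
  assumes "r > 0"
  shows "real (card {x. x < L \<and> [x + g = 0] (mod r)}) \<le> real L / real r + 1"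
proof -
  let ?A = "{x. x < L \<and> [x + g = 0] (mod r)}"
  have "inj_on (\<lambda>x. x div r) ?A"
  proof (rule inj_onI)
    fix x y assume "x \<in> ?A" "y \<in> ?A" "x div r = y div r"
    then have "[x + g = y + g] (mod r)" and div: "x div r = y div r"
      by (auto intro: cong_sym cong_trans)
    then have "[x = y] (mod r)"
      by (simp only: cong_add_rcancel_nat)
    then have "x mod r = y mod r"
      by (simp only: unique_euclidean_semiring_class.cong_def)
    with div show "x = y"
      by (metis div_mult_mod_eq)
  qed
  moreover have "(\<lambda>x. x div r) ` ?A \<subseteq> {..L div r}"
    by (auto intro: div_le_mono)
  ultimately have "real (card ?A) \<le> real (L div r) + 1"
    using card_inj_on_le[of "\<lambda>x. x div r" ?A "{..L div r}"] by simp
  moreover have "real (L div r) \<le> real L / real r"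
    by (rule of_nat_div_le_of_nat)
  ultimately show ?thesis
    by linarith
qed

lemma card_congruent_lessThan_ge:
  fixes r L g :: nat
  assumes "r > 0"
  shows "real L / real r - 1 \<le> real (card {x. x < L \<and> [x + g = 0] (mod r)})"
proof -
  let ?A = "{x. x < L \<and> [x + g = 0] (mod r)}"
  define c where "c = (r * g - g) mod r"
  have "c < r"
    using assms by (simp add: c_def)
  have "[c + g = r * g - g + g] (mod r)"
    unfolding c_def unique_euclidean_semiring_class.cong_def by (simp add: mod_add_left_eq)
  then have c: "[c + g = 0] (mod r)"
    using assms by (simp add: unique_euclidean_semiring_class.cong_def)
  have "(\<lambda>q. q * r + c) ` {..<L div r} \<subseteq> ?A"
  proof safe
    fix q assume "q < L div r"
    then have "Suc q * r \<le> L div r * r"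
      by (intro mult_le_mono1) simp
    also have "\<dots> \<le> L"
      by (rule div_times_less_eq_dividend)
    finally show "q * r + c < L"
      using \<open>c < r\<close> by simp
    show "[q * r + c + g = 0] (mod r)"
      using c by (simp add: unique_euclidean_semiring_class.cong_def add.assoc)
  qed
  moreover have "inj_on (\<lambda>q. q * r + c) {..<L div r}"
    using assms by (auto intro!: inj_onI)
  ultimately have "L div r \<le> card ?A"
    using card_inj_on_le[of "\<lambda>q. q * r + c" "{..<L div r}" ?A] by simp
  moreover have "real L / real r - 1 < real_of_int \<lfloor>real L / real r\<rfloor>"
    by (rule real_of_int_floor_gt_diff_one)
  moreover have "\<lfloor>real L / real r\<rfloor> = int (L div r)"
    by (rule floor_divide_of_nat_eq)
  ultimately show ?thesis
    by linarith
qed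

lemma card_lists_sum_less_Suc_filter:
  "card {xs \<in> lists_sum_less (Suc k) m. P xs} =
     (\<Sum>ys\<in>lists_sum_less k m. card {x. x < m - sum_list ys \<and> P (x # ys)})"
proof -
  let ?S = "SIGMA ys:lists_sum_less k m. {x. x < m - sum_list ys \<and> P (x # ys)}"
  have "{xs \<in> lists_sum_less (Suc k) m. P xs} = (\<lambda>(ys, x). x # ys) ` ?S"
  proof (intro equalityI subsetI)
    fix xs assume xs: "xs \<in> {xs \<in> lists_sum_less (Suc k) m. P xs}"
    then obtain x ys where "xs = x # ys"
      by (cases xs) (auto simp: lists_sum_less_def)
    with xs show "xs \<in> (\<lambda>(ys, x). x # ys) ` ?S"
      by (auto simp: lists_sum_less_def intro!: image_eqI[where x = "(ys, x)"])
  qed (auto simp: lists_sum_less_def)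
  moreover have "inj_on (\<lambda>(ys, x). x # ys) ?S"
    by (auto intro!: inj_onI)
  ultimately have "card {xs \<in> lists_sum_less (Suc k) m. P xs} = card ?S"
    by (simp add: card_image)
  also have "\<dots> = (\<Sum>ys\<in>lists_sum_less k m. card {x. x < m - sum_list ys \<and> P (x # ys)})"
    by (rule card_SigmaI) (auto simp: finite_lists_sum_less)
  finally show ?thesis .
qed

lemma card_lists_sum_less_congruent:
  fixes G :: "nat list \<Rightarrow> nat"
  assumes "r > 0"
  shows "\<bar>real (card {xs \<in> lists_sum_less (Suc k) m. [hd xs + G (tl xs) = 0] (mod r)})
           - real (card (lists_sum_less (Suc k) m)) / real r\<bar> \<le> real m ^ k"
proof -
  define R where "R ys = {x. x < m - sum_list ys \<and> [x + G ys = 0] (mod r)}" for ys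
  have fibre: "\<bar>real (card (R ys)) - real (m - sum_list ys) / real r\<bar> \<le> 1" for ys
    using card_congruent_lessThan_le[OF assms, of "m - sum_list ys" "G ys"]
      card_congruent_lessThan_ge[OF assms, of "m - sum_list ys" "G ys"]
    unfolding R_def by linarith
  have "card {xs \<in> lists_sum_less (Suc k) m. [hd xs + G (tl xs) = 0] (mod r)} =
      (\<Sum>ys\<in>lists_sum_less k m. card (R ys))"
    unfolding card_lists_sum_less_Suc_filter R_def by simp
  moreover have "card (lists_sum_less (Suc k) m) = (\<Sum>ys\<in>lists_sum_less k m. m - sum_list ys)"
    using card_lists_sum_less_Suc_filter[of k m "\<lambda>_. True"] by simp
  ultimately have "\<bar>real (card {xs \<in> lists_sum_less (Suc k) m. [hd xs + G (tl xs) = 0] (mod r)})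
           - real (card (lists_sum_less (Suc k) m)) / real r\<bar>
      = \<bar>\<Sum>ys\<in>lists_sum_less k m. real (card (R ys)) - real (m - sum_list ys) / real r\<bar>"
    by (simp add: sum_subtractf sum_divide_distrib)
  also have "\<dots> \<le> (\<Sum>ys\<in>lists_sum_less k m. 1)"
    using sum_abs fibre by (rule order_trans[OF _ sum_mono])
  also have "\<dots> \<le> real m ^ k"
    using card_lists_sum_less_le[of k m] by (simp flip: of_nat_power)
  finally show ?thesis .
qed

lemma colength_wbu_eq_card_lists:
  "colength_wbu (Suc k) r a w h =
     card {xs. length xs = Suc k \<and> w * real (sum_list xs) < real h \<and>
               [hd xs + (\<Sum>j<k. a (Suc j) * tl xs ! j) = 0] (mod r)}"
  (is "_ = card ?B")
proof -
  define pad where "pad xs i = (if i < Suc k then xs ! i else 0)" for xs :: "nat list" and i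
  have pad_sum: "(\<Sum>i<Suc k. pad xs i) = sum_list xs" if "length xs = Suc k" for xs
    using that by (simp add: pad_def sum_list_sum_nth atLeast0LessThan)
  have pad_invariant: "Zr_invariant (Suc k) r a (pad xs) \<longleftrightarrow>
      [hd xs + (\<Sum>j<k. a (Suc j) * tl xs ! j) = 0] (mod r)" if "length xs = Suc k" for xs
  proof -
    have "(\<Sum>j\<in>{1..<Suc k}. a j * pad xs j) = (\<Sum>j<k. a (Suc j) * pad xs (Suc j))"
      by (simp only: One_nat_def sum.shift_bounds_Suc_ivl atLeast0LessThan)
    also have "\<dots> = (\<Sum>j<k. a (Suc j) * tl xs ! j)"
      using that by (intro sum.cong) (auto simp: pad_def nth_tl)
    finally have "(\<Sum>j\<in>{1..<Suc k}. a j * pad xs j) = (\<Sum>j<k. a (Suc j) * tl xs ! j)" .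
    moreover have "pad xs 0 = hd xs"
      using that by (cases xs) (simp_all add: pad_def)
    ultimately show ?thesis
      by (simp add: Zr_invariant_def)
  qed
  have "{b \<in> monomials (Suc k). Zr_invariant (Suc k) r a b \<and>
        w * real (\<Sum>i<Suc k. b i) < real h} = pad ` ?B"
  proof (intro equalityI subsetI)
    fix b assume b: "b \<in> {b \<in> monomials (Suc k). Zr_invariant (Suc k) r a b \<and>
        w * real (\<Sum>i<Suc k. b i) < real h}"
    define xs where "xs = map b [0..<Suc k]"
    have length: "length xs = Suc k"
      by (simp add: xs_def)
    have "b = pad xs"
      using b by (auto simp: xs_def pad_def monomials_def fun_eq_iff not_less simp del: upt_Suc)
    with b show "b \<in> pad ` ?B"
      using pad_sum[OF length] pad_invariant[OF length] length
      by (auto simp del: sum.lessThan_Suc of_nat_sum)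
  next
    fix b assume "b \<in> pad ` ?B"
    then obtain xs where xs: "xs \<in> ?B" and b: "b = pad xs"
      by blast
    then have length: "length xs = Suc k"
      by simp
    have "pad xs \<in> monomials (Suc k)"
      by (simp add: monomials_def pad_def)
    with xs show "b \<in> {b \<in> monomials (Suc k). Zr_invariant (Suc k) r a b \<and>
        w * real (\<Sum>i<Suc k. b i) < real h}"
      using pad_sum[OF length] pad_invariant[OF length] unfolding b
      by (auto simp del: sum.lessThan_Suc of_nat_sum)
  qed
  moreover have "inj_on pad ?B"
  proof (rule inj_onI)
    fix xs ys assume "xs \<in> ?B" "ys \<in> ?B" and pad_eq: "pad xs = pad ys"
    have "xs ! i = ys ! i" if "i < Suc k" for i
      using fun_cong[OF pad_eq, of i] that by (simp add: pad_def)
    with \<open>xs \<in> ?B\<close> \<open>ys \<in> ?B\<close> show "xs = ys"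
      by (intro nth_equalityI) auto
  qed
  ultimately show ?thesis
    unfolding colength_wbu_def by (simp add: card_image)
qed

lemma colength_wbu_approx:
  fixes w :: real and h :: nat
  assumes "r > 0" and "w > 0"
  defines "m \<equiv> nat \<lceil>real h / w\<rceil>"
  shows "\<bar>real (colength_wbu (Suc k) r a w h) - real (card (lists_sum_less (Suc k) m)) / real r\<bar>
           \<le> real m ^ k"
proof -
  have degree_bound: "w * real s < real h \<longleftrightarrow> s < m" for s
  proof -
    have "w * real s < real h \<longleftrightarrow> real s < real h / w"
      using assms(2) by (simp add: field_simps)
    also have "\<dots> \<longleftrightarrow> s < m"
      unfolding m_def by (simp add: less_ceiling_iff zless_nat_eq_int_zless)
    finally show ?thesis .
  qed
  have "colength_wbu (Suc k) r a w h =
      card {xs \<in> lists_sum_less (Suc k) m. [hd xs + (\<Sum>j<k. a (Suc j) * tl xs ! j) = 0] (mod r)}"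
    unfolding colength_wbu_eq_card_lists lists_sum_less_def by (simp add: degree_bound)
  then show ?thesis
    using card_lists_sum_less_congruent[OF assms(1)] by simp
qed

lemma power_Suc_diff_le:
  fixes y d :: real
  assumes "y \<ge> 0" and "d \<ge> 0"
  shows "(y + d) ^ Suc k - y ^ Suc k \<le> real (Suc k) * d * (y + d) ^ k"
proof (induction k)
  case 0
  then show ?case by simp
next
  case (Suc k)
  have "(y + d) ^ Suc (Suc k) - y ^ Suc (Suc k)
      = (y + d) * ((y + d) ^ Suc k - y ^ Suc k) + d * y ^ Suc k"
    by (simp add: algebra_simps)
  also have "\<dots> \<le> (y + d) * (real (Suc k) * d * (y + d) ^ k) + d * (y + d) ^ Suc k"
    using assms Suc by (intro add_mono mult_left_mono power_mono) auto
  also have "\<dots> = real (Suc (Suc k)) * d * (y + d) ^ Suc k"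
    by (simp add: algebra_simps)
  finally show ?case .
qed

lemma colength_wbu_error_bound:
  fixes w :: real and h k :: nat
  assumes "r > 0" and "w > 0"
  defines "x \<equiv> real h / w" and "e \<equiv> real k + 2"
  shows "\<bar>real (colength_wbu (Suc k) r a w h) - x ^ Suc k / (real r * fact (Suc k))\<bar>
           \<le> (real (Suc k) * e + 1) * (x + e) ^ k"
proof -
  define m where "m = nat \<lceil>x\<rceil>"
  let ?C = "real (colength_wbu (Suc k) r a w h)"
  let ?S = "real (card (lists_sum_less (Suc k) m))"
  let ?Q = "real r * fact (Suc k)"
  have x: "0 \<le> x" "x \<le> real m" "real m \<le> x + 1"
    using assms(2) by (auto simp: x_def m_def of_nat_nat ceiling_correct less_imp_le)
  have approx: "\<bar>?C - ?S / real r\<bar> \<le> real m ^ k"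
    using colength_wbu_approx[OF assms(1,2)] unfolding m_def x_def .
  have "x ^ Suc k \<le> real m ^ Suc k"
    using x by (intro power_mono) auto
  then have lower: "x ^ Suc k / ?Q \<le> ?S / real r"
    using card_lists_sum_less_bounds(1)[of "Suc k" m] assms(1)
    by (simp add: field_simps del: fact_Suc)
  have "(real m + real (Suc k)) ^ Suc k \<le> (x + e) ^ Suc k"
    using x by (intro power_mono) (auto simp: e_def)
  then have upper: "?S / real r \<le> (x + e) ^ Suc k / ?Q"
    using card_lists_sum_less_bounds(2)[of "Suc k" m] assms(1)
    by (simp add: field_simps del: fact_Suc)
  have "real m ^ k \<le> (x + e) ^ k"
    using x by (intro power_mono) (auto simp: e_def)
  moreover have "(x + e) ^ Suc k / ?Q - x ^ Suc k / ?Q \<le> real (Suc k) * e * (x + e) ^ k"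
  proof -
    have "1 \<le> ?Q"
      using assms(1) mult_mono[of 1 "real r" 1 "fact (Suc k)"] fact_ge_1[of "Suc k"]
      by (simp del: fact_Suc)
    moreover have "0 \<le> (x + e) ^ Suc k - x ^ Suc k"
      using x power_mono[of x "x + e" "Suc k"] by (simp add: e_def del: power_Suc)
    ultimately have "((x + e) ^ Suc k - x ^ Suc k) / ?Q \<le> (x + e) ^ Suc k - x ^ Suc k"
      by (simp add: divide_le_eq mult_le_cancel_left1 del: fact_Suc)
    also have "\<dots> \<le> real (Suc k) * e * (x + e) ^ k"
      using x by (intro power_Suc_diff_le) (auto simp: e_def)
    finally show ?thesis
      by (simp add: diff_divide_distrib)
  qed
  moreover have "(real (Suc k) * e + 1) * (x + e) ^ k
      = real (Suc k) * e * (x + e) ^ k + (x + e) ^ k"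
    by (simp add: algebra_simps)
  ultimately show ?thesis
    using approx lower upper unfolding abs_le_iff by linarith
qed

lemma has_wmult_colength_wbu:
  fixes w :: real
  assumes "r > 0" and "w > 0"
  shows "has_wmult (Suc k) (colength_wbu (Suc k) r a w) (1 / (real r * w ^ Suc k))"
proof -
  define e where "e = real k + 2"
  define error where "error h = real (colength_wbu (Suc k) r a w h)
      - 1 / (real r * w ^ Suc k) * real h ^ Suc k / fact (Suc k)" for h
  have "\<bar>error h\<bar> \<le> (real (Suc k) * e + 1) * \<bar>(real h / w + e) ^ k\<bar>" for h
  proof -
    have error_eq: "error h = real (colength_wbu (Suc k) r a w h)
        - (real h / w) ^ Suc k / (real r * fact (Suc k))"
      unfolding error_def by (simp add: power_divide)
    have "\<bar>(real h / w + e) ^ k\<bar> = (real h / w + e) ^ k"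
      using assms(2) by (simp add: e_def)
    then show ?thesis
      unfolding error_eq e_def by (simp only: colength_wbu_error_bound[OF assms])
  qed
  then have "error \<in> O(\<lambda>h. (real h / w + e) ^ k)"
    by (intro bigoI[where c = "real (Suc k) * e + 1"] always_eventually) simp
  also have "(\<lambda>h. (real h / w + e) ^ k) \<in> O(\<lambda>h. real h ^ k)"
    using assms(2) by (intro landau_o.big_power) real_asymp
  also have "(\<lambda>h. real h ^ k) \<in> o(\<lambda>h. real h ^ Suc k)"
    by (rule landau_o.small_power_increasing) (real_asymp, simp)
  finally show ?thesis
    unfolding has_wmult_def error_def .
qed

lemma l_index_pos: "r > 0 \<Longrightarrow> l_index n r a > 0"
  unfolding l_index_def by (rule LeastI2[of _ r]) (auto simp: unique_euclidean_semiring_class.cong_def)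

theorem theorem2p5:
  fixes n r :: nat and a :: "nat \<Rightarrow> nat"
  assumes "n \<ge> 2" and "r > 0"
    and "coprime (a 1) r"
    and "\<forall>j\<in>{1..<n}. a j < r"
  shows "has_wmult n (colength_wbu n r a (real (l_index n r a) / real r))
           (real r ^ (n - 1) / real (l_index n r a) ^ n)"
proof -
  obtain k where n: "n = Suc k"
    using assms(1) by (cases n) auto
  have l: "real (l_index n r a) > 0"
    using l_index_pos[OF assms(2)] by simp
  have "1 / (real r * (real (l_index n r a) / real r) ^ n)
      = real r ^ (n - 1) / real (l_index n r a) ^ n"
    using assms(2) l by (simp add: n power_divide field_simps)
  then show ?thesis
    using has_wmult_colength_wbu[OF assms(2), of "real (l_index n r a) / real r" k a] assms(2) l
    by (simp add: n)
qed

end
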